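(* Let $A$ be a subring of $\mathbb{R}$ and let $H(A)$ be as in the context. For each $r\in A$ and each $p\in\mathbb{R}$ there exists $f\in H(A)$ with the following properties: (1) $f$ is supported on $[y,\infty)$ for some $y<p$; (2) the restriction of $f$ to $(p,\infty)$ equals $t\mapsto t+r$.
   Context: For a subring $A\subseteq\mathbb{R}$, let $P_A\subseteq\mathbb{R}\cup\{\infty\}$ be the set of fixed points of hyperbolic elements (those with $|\mathrm{trace}|>2$) of $PSL_2(A)$ acting by Möbius transformations. $H(A)$ is the group of orientation-preserving homeomorphisms $f$ of $\mathbb{R}$ for which there are finitely many breakpoints $t_1<\dots<t_n$ in $P_A$ such that on each of the intervals $(-\infty,t_1]$, $[t_i,t_{i+1}]$ and $[t_n,\infty)$, $f$ agrees with a map $t\mapsto(at+b)/(ct+d)$ with $\begin{pmatrix}a&b\\c&d\end{pmatrix}\in PSL_2(A)$. *)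

theory Defs
  imports "HOL-Analysis.Analysis"
begin

definition is_subring :: "real set \<Rightarrow> bool" where
  "is_subring A \<longleftrightarrow> 0 \<in> A \<and> 1 \<in> A \<and>
     (\<forall>x\<in>A. \<forall>y\<in>A. x + y \<in> A \<and> x - y \<in> A \<and> x * y \<in> A)"

text \<open>Matrices (a,b,c,d) with entries in A and determinant 1. Since M and -M induce the
  same Moebius map, Moebius maps of PSL_2(A) are exactly those of these matrices.\<close>
definition SL2 :: "real set \<Rightarrow> (real \<times> real \<times> real \<times> real) set" where
  "SL2 A = {(a,b,c,d). a \<in> A \<and> b \<in> A \<and> c \<in> A \<and> d \<in> A \<and> a * d - b * c = 1}"

definition mob :: "real \<times> real \<times> real \<times> real \<Rightarrow> real \<Rightarrow> real" where
  "mob M t = (case M of (a,b,c,d) \<Rightarrow> (a * t + b) / (c * t + d))"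

definition mob_den :: "real \<times> real \<times> real \<times> real \<Rightarrow> real \<Rightarrow> real" where
  "mob_den M t = (case M of (a,b,c,d) \<Rightarrow> c * t + d)"

text \<open>Real fixed points of hyperbolic elements (|trace| > 2). The point \<infinity> is irrelevant
  since breakpoints are real. t is fixed by (at+b)/(ct+d) iff c t^2 + (d-a) t - b = 0
  (for hyperbolic elements this polynomial is nonzero and ct+d \<noteq> 0 at such t).\<close>
definition P_A :: "real set \<Rightarrow> real set" where
  "P_A A = {t. \<exists>a b c d. (a,b,c,d) \<in> SL2 A \<and> \<bar>a + d\<bar> > 2 \<and> c * t\<^sup>2 + (d - a) * t - b = 0}"

definition pieces :: "real list \<Rightarrow> real set set" where
  "pieces ts = (if ts = [] then {UNIV}
     else {{..hd ts}, {last ts..}} \<union> {{ts ! i .. ts ! Suc i} | i. Suc i < length ts})"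

definition H :: "real set \<Rightarrow> (real \<Rightarrow> real) set" where
  "H A = {f. (\<exists>g. homeomorphism UNIV UNIV f g) \<and> strict_mono f \<and>
     (\<exists>ts. sorted_wrt (<) ts \<and> set ts \<subseteq> P_A A \<and>
        (\<forall>I\<in>pieces ts. \<exists>M\<in>SL2 A. \<forall>t\<in>I. mob_den M t \<noteq> 0 \<and> f t = mob M t))}"

end

theory Submission
  imports Defs
begin

text \<open>Choose an integer \<open>a\<close> with \<open>a > 2\<close> and \<open>a - r > 2\<close>. The hyperbolic map \<open>t \<mapsto> a - 1/t\<close> has a
  fixed point \<open>y \<in> (0, 1)\<close> (a root of \<open>y\<^sup>2 - a y + 1\<close>), and it sends a root \<open>x > 1\<close> of
  \<open>x\<^sup>2 - (a - r) x + 1\<close> to \<open>x + r\<close>, i.e. \<open>x\<close> is a fixed point of the hyperbolic map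
  \<open>t \<mapsto> a - r - 1/t\<close>. So the function that is the identity up to \<open>y\<close>, equal to \<open>t \<mapsto> a - 1/t\<close>
  on \<open>[y, x]\<close> and the translation by \<open>r\<close> beyond \<open>x\<close> is a continuous increasing element of
  \<open>H(A)\<close> with breakpoints \<open>y, x \<in> P_A\<close>. Conjugating by an integer translation moves \<open>x\<close> below \<open>p\<close>.\<close>

lemma subring_closed:
  assumes "is_subring A" "x \<in> A" "y \<in> A"
  shows subring_add: "x + y \<in> A" and subring_diff: "x - y \<in> A"
    and subring_mult: "x * y \<in> A" and subring_uminus: "- x \<in> A"
proof -
  show "x + y \<in> A" "x - y \<in> A" "x * y \<in> A" using assms unfolding is_subring_def by auto
  have "0 - x \<in> A" using assms unfolding is_subring_def by auto
  then show "- x \<in> A" by simp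
qed

lemma subring_of_int:
  assumes "is_subring A" shows "real_of_int k \<in> A"
proof (induction k rule: int_induct[where k=0])
  case base then show ?case using assms by (simp add: is_subring_def)
next
  case (step1 i) then show ?case using assms subring_add[of A "real_of_int i" 1]
    by (simp add: is_subring_def)
next
  case (step2 i) then show ?case using assms subring_diff[of A "real_of_int i" 1]
    by (simp add: is_subring_def)
qed

lemma mob_diff:
  assumes "M \<in> SL2 A" "mob_den M s \<noteq> 0" "mob_den M t \<noteq> 0"
  shows "mob M t - mob M s = (t - s) / (mob_den M s * mob_den M t)"
proof -
  obtain a b c d where M: "M = (a, b, c, d)" "a * d - b * c = 1"
    using assms(1) unfolding SL2_def by auto
  have "(a * t + b) * (c * s + d) - (a * s + b) * (c * t + d) = (a * d - b * c) * (t - s)"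
    by algebra
  then show ?thesis using assms(2,3) M by (simp add: mob_def mob_den_def field_simps)
qed

lemma strict_mono_on_mob:
  assumes "M \<in> SL2 A" "\<forall>t\<in>S. mob_den M t > 0"
  shows "strict_mono_on S (mob M)"
proof (rule strict_mono_onI)
  fix s t assume "s \<in> S" "t \<in> S" "s < t"
  then have "0 < (t - s) / (mob_den M s * mob_den M t)"
    using assms(2) by simp
  moreover have "mob M t - mob M s = (t - s) / (mob_den M s * mob_den M t)"
    using mob_diff[OF assms(1), of s t] assms(2) \<open>s \<in> S\<close> \<open>t \<in> S\<close> by force
  ultimately show "mob M s < mob M t" by linarith
qed

lemma continuous_on_mob:
  assumes "\<forall>t\<in>S. mob_den M t \<noteq> 0"
  shows "continuous_on S (mob M)"
proof -
  obtain a b c d where "M = (a, b, c, d)" by (cases M) auto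
  then show ?thesis
    using assms unfolding mob_def mob_den_def by (auto intro!: continuous_intros)
qed

text \<open>The matrix of \<open>t \<mapsto> a - 1/t\<close> conjugated by the translation \<open>t \<mapsto> t + n\<close>.\<close>
definition recip_matrix :: "real \<Rightarrow> real \<Rightarrow> real \<times> real \<times> real \<times> real" where
  "recip_matrix a n = (a + n, - ((a + n) * n) - 1, 1, - n)"

lemma mob_den_recip_matrix [simp]: "mob_den (recip_matrix a n) t = t - n"
  by (simp add: recip_matrix_def mob_den_def)

lemma mob_recip_matrix:
  assumes "t \<noteq> n" shows "mob (recip_matrix a n) t = a + n - 1 / (t - n)"
  using assms by (simp add: recip_matrix_def mob_def field_simps)

lemma recip_matrix_SL2:
  assumes "is_subring A" "a \<in> A" "n \<in> A"
  shows "recip_matrix a n \<in> SL2 A"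
proof -
  have "a + n \<in> A" using assms subring_add by blast
  moreover from this have "- ((a + n) * n) - 1 \<in> A"
    using assms subring_mult subring_uminus subring_diff by (simp add: is_subring_def)
  moreover have "1 \<in> A" "- n \<in> A" using assms subring_uminus by (auto simp: is_subring_def)
  ultimately show ?thesis
    unfolding SL2_def recip_matrix_def by (simp add: algebra_simps)
qed

lemma root_translate_in_P_A:
  assumes "is_subring A" "a \<in> A" "n \<in> A" "\<bar>a\<bar> > 2" "z\<^sup>2 - a * z + 1 = 0"
  shows "z + n \<in> P_A A"
proof -
  have "(a + n, - ((a + n) * n) - 1, 1, - n) \<in> SL2 A"
    using recip_matrix_SL2[OF assms(1-3)] by (simp add: recip_matrix_def)
  moreover have "1 * (z + n)\<^sup>2 + (- n - (a + n)) * (z + n) - (- ((a + n) * n) - 1) = 0"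
    using assms(5) by (simp add: algebra_simps power2_eq_square)
  ultimately show ?thesis
    unfolding P_A_def using assms(4)
    by (intro CollectI exI[of _ "a + n"] exI[of _ "- ((a + n) * n) - 1"] exI[of _ 1] exI[of _ "- n"]) auto
qed

lemma exists_root_gt_1:
  fixes b :: real
  assumes "b > 2" shows "\<exists>z>1. z\<^sup>2 - b * z + 1 = 0"
proof (intro exI conjI)
  have "2 * 2 \<le> b * b" using mult_mono[of 2 b 2 b] assms by simp
  then have "(sqrt (b\<^sup>2 - 4))\<^sup>2 = b\<^sup>2 - 4" "sqrt (b\<^sup>2 - 4) \<ge> 0"
    by (simp_all add: power2_eq_square)
  then have "2 < b + sqrt (b\<^sup>2 - 4)" using assms by linarith
  then show "(b + sqrt (b\<^sup>2 - 4)) / 2 > 1" by simp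
  from \<open>(sqrt (b\<^sup>2 - 4))\<^sup>2 = b\<^sup>2 - 4\<close>
  show "((b + sqrt (b\<^sup>2 - 4)) / 2)\<^sup>2 - b * ((b + sqrt (b\<^sup>2 - 4)) / 2) + 1 = 0"
    by (simp add: power2_eq_square field_simps)
qed

lemma root_inverse:
  fixes z b :: real
  assumes "z \<noteq> 0" "z\<^sup>2 - b * z + 1 = 0" shows "(1 / z)\<^sup>2 - b * (1 / z) + 1 = 0"
proof -
  have "z\<^sup>2 * ((1 / z)\<^sup>2 - b * (1 / z) + 1) = z\<^sup>2 - b * z + 1"
    using assms(1) by (simp add: field_simps power2_eq_square)
  then show ?thesis using assms by simp
qed

lemma strict_mono_on_split:
  fixes f :: "real \<Rightarrow> 'b::order"
  assumes "strict_mono_on (S \<inter> {..u}) f" "strict_mono_on (S \<inter> {u..}) f" "u \<in> S"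
  shows "strict_mono_on S f"
proof (rule strict_mono_onI)
  fix s t assume st: "s \<in> S" "t \<in> S" "s < t"
  consider "t \<le> u" | "u \<le> s" | "s < u" "u < t" by linarith
  then show "f s < f t"
  proof cases
    case 3
    then have "f s < f u" "f u < f t"
      using st assms by (auto intro: strict_mono_onD)
    then show ?thesis by order
  qed (use st assms in \<open>auto intro: strict_mono_onD\<close>)
qed

lemma surj_continuous_translation_at_infinity:
  fixes f :: "real \<Rightarrow> real"
  assumes "continuous_on UNIV f" "\<forall>t\<le>u. f t = t" "\<forall>t\<ge>v. f t = t + r"
  shows "surj f"
proof -
  have "s \<in> range f" for s
  proof -
    define lo where "lo = min s u"
    define hi where "hi = max (max (s - r) v) lo"
    have "f lo \<le> s" "s \<le> f hi" "lo \<le> hi"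
      using assms(2,3) unfolding lo_def hi_def by auto
    moreover have "continuous_on {lo..hi} f" using assms(1) continuous_on_subset by blast
    ultimately show ?thesis using IVT'[of f lo s hi] by (metis rangeI)
  qed
  then show ?thesis by blast
qed

definition glue :: "real \<Rightarrow> real \<Rightarrow> real \<times> real \<times> real \<times> real \<Rightarrow> real \<Rightarrow> real \<Rightarrow> real" where
  "glue u v M r t = (if t \<le> u then t else if t \<le> v then mob M t else t + r)"

lemma glue_in_H:
  assumes A: "is_subring A" and "r \<in> A" and M: "M \<in> SL2 A"
    and uv: "u < v" "u \<in> P_A A" "v \<in> P_A A"
    and den: "\<forall>t\<in>{u..v}. mob_den M t > 0"
    and Mu: "mob M u = u" and Mv: "mob M v = v + r"
  shows "glue u v M r \<in> H A"
proof -
  let ?f = "glue u v M r"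
  have f_id: "?f t = t" if "t \<le> u" for t
    using that by (simp add: glue_def)
  have f_mob: "?f t = mob M t" if "t \<in> {u..v}" for t
    using that Mu by (auto simp: glue_def)
  have f_transl: "?f t = t + r" if "v \<le> t" for t
    using that uv Mv by (auto simp: glue_def)
  have mono: "strict_mono ?f"
  proof -
    have "strict_mono_on {u..v} ?f"
      using strict_mono_on_mob[OF M den] by (auto intro!: strict_mono_onI dest: strict_mono_onD simp: f_mob)
    moreover have "strict_mono_on {v..} ?f"
      by (auto intro!: strict_mono_onI simp: f_transl)
    moreover have "{u..} \<inter> {..v} = {u..v}" "{u..} \<inter> {v..} = {v..}" using uv by auto
    ultimately have "strict_mono_on {u..} ?f"
      using uv strict_mono_on_split[of "{u..}" v ?f] by simp
    moreover have "strict_mono_on {..u} ?f"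
      by (auto intro!: strict_mono_onI simp: f_id)
    ultimately show ?thesis
      using strict_mono_on_split[of UNIV u ?f] by simp
  qed
  have cont: "continuous_on UNIV ?f"
  proof -
    have "continuous_on {t. u \<le> t \<and> t \<le> v} (mob M)"
      by (rule continuous_on_mob) (use den in force)
    then have right: "continuous_on {t. u \<le> t} (\<lambda>t. if t \<le> v then mob M t else t + r)"
      using Mv by (intro continuous_on_cases_le[where h="\<lambda>t. t"]) (auto intro!: continuous_intros)
    show ?thesis
      unfolding glue_def
      by (rule continuous_on_cases_le[where h="\<lambda>t. t"]) (use right Mu uv in \<open>auto intro: continuous_on_id\<close>)
  qed
  have "surj ?f"
    using cont f_id f_transl by (intro surj_continuous_translation_at_infinity) auto
  then have homeo: "\<exists>g. homeomorphism UNIV UNIV ?f g"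
    using invariance_of_domain_homeomorphism[of UNIV ?f] cont strict_mono_imp_inj_on[OF mono]
    by (metis DIM_real open_UNIV order_refl)
  have id_SL2: "(1, 0, 0, 1) \<in> SL2 A" and transl_SL2: "(1, r, 0, 1) \<in> SL2 A"
    using A \<open>r \<in> A\<close> unfolding SL2_def is_subring_def by auto
  have "\<forall>t\<in>{..u}. mob_den (1, 0, 0, 1) t \<noteq> 0 \<and> ?f t = mob (1, 0, 0, 1) t"
    by (simp add: mob_def mob_den_def f_id)
  moreover have "\<forall>t\<in>{v..}. mob_den (1, r, 0, 1) t \<noteq> 0 \<and> ?f t = mob (1, r, 0, 1) t"
    by (simp add: mob_def mob_den_def f_transl)
  moreover have "\<forall>t\<in>{u..v}. mob_den M t \<noteq> 0 \<and> ?f t = mob M t"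
    using den f_mob by force
  moreover have "pieces [u, v] = {{..u}, {v..}, {u..v}}"
    unfolding pieces_def by auto
  ultimately have "\<forall>I\<in>pieces [u, v]. \<exists>N\<in>SL2 A. \<forall>t\<in>I. mob_den N t \<noteq> 0 \<and> ?f t = mob N t"
    using id_SL2 transl_SL2 M by blast
  then show ?thesis
    unfolding H_def using homeo mono uv by (intro CollectI conjI exI[of _ "[u, v]"]) auto
qed

lemma recip_glue_in_H:
  assumes A: "is_subring A" and "a \<in> A" "n \<in> A" "r \<in> A"
    and "\<bar>a\<bar> > 2" "\<bar>a - r\<bar> > 2" "0 < y" "y < x"
    and y: "y\<^sup>2 - a * y + 1 = 0" and x: "x\<^sup>2 - (a - r) * x + 1 = 0"
  shows "glue (y + n) (x + n) (recip_matrix a n) r \<in> H A"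
proof (rule glue_in_H)
  show "recip_matrix a n \<in> SL2 A" using assms by (intro recip_matrix_SL2)
  show "y + n \<in> P_A A" using assms by (intro root_translate_in_P_A) auto
  show "x + n \<in> P_A A" using assms subring_diff by (intro root_translate_in_P_A) auto
  show "mob (recip_matrix a n) (y + n) = y + n"
    using y \<open>0 < y\<close> by (simp add: mob_recip_matrix field_simps power2_eq_square)
  show "mob (recip_matrix a n) (x + n) = x + n + r"
    using x \<open>0 < y\<close> \<open>y < x\<close> by (simp add: mob_recip_matrix field_simps power2_eq_square)
qed (use assms in auto)

theorem mainTheorem12:
  fixes A :: "real set" and r p :: real
  assumes "is_subring A" and "r \<in> A"
  shows "\<exists>f\<in>H A. (\<exists>y<p. \<forall>t. t < y \<longrightarrow> f t = t) \<and> (\<forall>t>p. f t = t + r)"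
proof -
  define a where "a = real_of_int (\<lceil>\<bar>r\<bar>\<rceil> + 3)"
  have a: "a \<in> A" "a > 2" "a - r > 2"
    unfolding a_def using subring_of_int[OF assms(1)] by (blast, linarith+)
  obtain z where z: "z > 1" "z\<^sup>2 - a * z + 1 = 0" using exists_root_gt_1 a(2) by blast
  obtain x where x: "x > 1" "x\<^sup>2 - (a - r) * x + 1 = 0" using exists_root_gt_1 a(3) by blast
  define y where "y = 1 / z" \<comment> \<open>the other root, so \<open>y < 1 < x\<close>\<close>
  have y: "0 < y" "y < x" "y\<^sup>2 - a * y + 1 = 0"
    using z x root_inverse[of z a] unfolding y_def by (auto simp: divide_less_eq less_1_mult)
  define n where "n = real_of_int \<lfloor>p - x\<rfloor>"
  have "x + n \<le> p" unfolding n_def by linarith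
  moreover have "glue (y + n) (x + n) (recip_matrix a n) r \<in> H A"
    using assms a x y subring_of_int[OF assms(1)] unfolding n_def
    by (intro recip_glue_in_H) auto
  ultimately show ?thesis
    using \<open>y < x\<close> by (intro bexI[of _ "glue (y + n) (x + n) (recip_matrix a n) r"] conjI
        exI[of _ "y + n"]) (auto simp: glue_def)
qed

end
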